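(* For any complex numbers $a,b,\alpha,\beta,\theta$ with $\beta a-\alpha b\neq0$ and any natural number $n\ge1$, \[ \sum_{r=0}^{\lfloor n/2\rfloor}\Psi\left(\begin{array}{cc|c} a & b & n \\ \alpha & \beta & r \end{array}\right)\theta^r=\Psi(a-\alpha\theta,b-\beta\theta,n),\qquad \sum_{r=0}^{\lfloor (n-1)/2\rfloor}\Phi\left(\begin{array}{cc|c} a & b & n \\ \alpha & \beta & r \end{array}\right)\theta^r=\Phi(a-\alpha\theta,b-\beta\theta,n). \]
   Context: $\delta(m)=1$ for $m$ odd, $0$ for $m$ even; $\lfloor\cdot\rfloor$ is the floor. $\Psi(a,b,n)$, $\Phi(a,b,n)$ are defined by $\Psi(a,b,0)=2$, $\Psi(a,b,1)=1$, $\Psi(a,b,n+1)=(2a-b)^{\delta(n)}\Psi(a,b,n)-a\Psi(a,b,n-1)$ and $\Phi(a,b,0)=0$, $\Phi(a,b,1)=1$, $\Phi(a,b,n+1)=(2a-b)^{\delta(n+1)}\Phi(a,b,n)-a\Phi(a,b,n-1)$. For $n\ge1$ and numbers with $\beta a-\alpha b\ne0$, $\Psi\left(\begin{array}{cc|c} a & b & n \\ \alpha & \beta & r \end{array}\right)$ ($0\le r\le\lfloor n/2\rfloor$) and $\Phi\left(\begin{array}{cc|c} a & b & n \\ \alpha & \beta & r \end{array}\right)$ ($0\le r\le\lfloor (n-1)/2\rfloor$) are the unique numbers such that, identically in $x,y$, $(\beta a-\alpha b)^{\lfloor n/2\rfloor}\frac{x^n+y^n}{(x+y)^{\delta(n)}}=\sum_{r}\Psi\left(\begin{array}{cc|c}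 a & b & n \\ \alpha & \beta & r \end{array}\right)(\alpha x^2+\beta xy+\alpha y^2)^{\lfloor n/2\rfloor-r}(ax^2+bxy+ay^2)^r$ and $(\beta a-\alpha b)^{\lfloor (n-1)/2\rfloor}\frac{x^n-y^n}{(x-y)(x+y)^{\delta(n-1)}}=\sum_{r}\Phi\left(\begin{array}{cc|c} a & b & n \\ \alpha & \beta & r \end{array}\right)(\alpha x^2+\beta xy+\alpha y^2)^{\lfloor (n-1)/2\rfloor-r}(ax^2+bxy+ay^2)^r$. *)

theory Defs
  imports Complex_Main
begin

definition delta :: "nat \<Rightarrow> nat" where
  "delta m = (if odd m then 1 else 0)"

fun Psi :: "complex \<Rightarrow> complex \<Rightarrow> nat \<Rightarrow> complex" where
  "Psi a b 0 = 2"
| "Psi a b (Suc 0) = 1"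
| "Psi a b (Suc (Suc m)) = (2*a - b) ^ delta (Suc m) * Psi a b (Suc m) - a * Psi a b m"

fun Phi :: "complex \<Rightarrow> complex \<Rightarrow> nat \<Rightarrow> complex" where
  "Phi a b 0 = 0"
| "Phi a b (Suc 0) = 1"
| "Phi a b (Suc (Suc m)) = (2*a - b) ^ delta (Suc (Suc m)) * Phi a b (Suc m) - a * Phi a b m"

definition Psi_coef :: "complex \<Rightarrow> complex \<Rightarrow> complex \<Rightarrow> complex \<Rightarrow> nat \<Rightarrow> nat \<Rightarrow> complex" where
  "Psi_coef a b \<alpha> \<beta> n = (THE c. (\<forall>r. n div 2 < r \<longrightarrow> c r = 0) \<and>
     (\<forall>x y. (x + y) ^ delta n \<noteq> 0 \<longrightarrow>
        (\<beta>*a - \<alpha>*b) ^ (n div 2) * (x^n + y^n) / (x + y) ^ delta n =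
        (\<Sum>r = 0..n div 2. c r * (\<alpha>*x^2 + \<beta>*x*y + \<alpha>*y^2) ^ (n div 2 - r)
                               * (a*x^2 + b*x*y + a*y^2) ^ r)))"

definition Phi_coef :: "complex \<Rightarrow> complex \<Rightarrow> complex \<Rightarrow> complex \<Rightarrow> nat \<Rightarrow> nat \<Rightarrow> complex" where
  "Phi_coef a b \<alpha> \<beta> n = (THE c. (\<forall>r. (n - 1) div 2 < r \<longrightarrow> c r = 0) \<and>
     (\<forall>x y. (x - y) * (x + y) ^ delta (n - 1) \<noteq> 0 \<longrightarrow>
        (\<beta>*a - \<alpha>*b) ^ ((n - 1) div 2) * (x^n - y^n) / ((x - y) * (x + y) ^ delta (n - 1)) =
        (\<Sum>r = 0..(n - 1) div 2. c r * (\<alpha>*x^2 + \<beta>*x*y + \<alpha>*y^2) ^ ((n - 1) div 2 - r)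
                               * (a*x^2 + b*x*y + a*y^2) ^ r)))"

end

theory Submission
  imports Defs
begin

text \<open>Write \<open>B = \<alpha>x\<^sup>2 + \<beta>xy + \<alpha>y\<^sup>2\<close>, \<open>A = ax\<^sup>2 + bxy + ay\<^sup>2\<close> and \<open>D = \<beta>a - \<alpha>b\<close>.
  By the recurrence, \<open>Psi (au - \<alpha>v) (bu - \<beta>v) n\<close> is a binary form of degree \<open>n div 2\<close>
  in \<open>(u, v)\<close>. At \<open>(u, v) = (B, A)\<close> it equals \<open>Psi (Dxy) (-D(x\<^sup>2 + y\<^sup>2)) n\<close>, which by homogeneity
  is \<open>D\<^bsup>n div 2\<^esup> Psi (xy) (-(x\<^sup>2 + y\<^sup>2)) n = D\<^bsup>n div 2\<^esup> (x\<^sup>n + y\<^sup>n) / (x + y)\<^bsup>\<delta>(n)\<^esup>\<close>.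
  Hence the coefficients of the form are the coefficients of the theorem; they are unique
  because \<open>(B, A)\<close> takes the value \<open>(1, t)\<close> for all but finitely many \<open>t\<close>. Evaluating
  the form at \<open>(u, v) = (1, \<theta>)\<close> gives the identity. The same argument applies to \<open>Phi\<close>.\<close>

definition binary_form :: "nat \<Rightarrow> ('a::comm_ring_1 \<Rightarrow> 'a \<Rightarrow> 'a) \<Rightarrow> bool" where
  "binary_form m f \<longleftrightarrow> (\<exists>c. \<forall>u v. f u v = (\<Sum>r = 0..m. c r * u^(m-r) * v^r))"

lemma binary_form_const: "binary_form 0 (\<lambda>u v. k)"
  unfolding binary_form_def by (rule exI[of _ "\<lambda>_. k"]) simp

lemma binary_form_diff:
  assumes "binary_form m f" "binary_form m g"
  shows "binary_form m (\<lambda>u v. f u v - g u v)"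
proof -
  obtain c d where "\<And>u v. f u v = (\<Sum>r = 0..m. c r * u^(m-r) * v^r)"
    and "\<And>u v. g u v = (\<Sum>r = 0..m. d r * u^(m-r) * v^r)"
    using assms unfolding binary_form_def by metis
  then show ?thesis unfolding binary_form_def
    by (intro exI[of _ "\<lambda>r. c r - d r"]) (simp add: sum_subtractf[symmetric] algebra_simps)
qed

lemma binary_form_linear_mult:
  assumes "binary_form m f"
  shows "binary_form (Suc m) (\<lambda>u v. (g0*u + g1*v) * f u v)"
proof -
  obtain c where c: "\<And>u v. f u v = (\<Sum>r = 0..m. c r * u^(m-r) * v^r)"
    using assms unfolding binary_form_def by metis
  define e0 where "e0 r = (if r \<le> m then g0 * c r else 0)" for r
  define e1 where "e1 r = (if r = 0 then 0 else g1 * c (r - 1))" for r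
  have "(\<Sum>r = 0..Suc m. (e0 r + e1 r) * u^(Suc m-r) * v^r) = (g0*u + g1*v) * f u v" for u v
  proof -
    have "(\<Sum>r = 0..Suc m. e0 r * u^(Suc m-r) * v^r) = (\<Sum>r = 0..m. g0 * c r * u^(Suc m-r) * v^r)"
      by (simp add: e0_def sum.atLeast0_atMost_Suc)
    moreover have "(\<Sum>r = 0..Suc m. e1 r * u^(Suc m-r) * v^r) = (\<Sum>r = 0..m. g1 * c r * u^(m-r) * v^(Suc r))"
      by (subst sum.atLeast0_atMost_Suc_shift) (simp add: e1_def)
    ultimately show ?thesis
      by (simp add: c distrib_right sum.distrib sum_distrib_left Suc_diff_le algebra_simps)
  qed
  then show ?thesis unfolding binary_form_def by metis
qed

lemma binary_form_linear_power_mult: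
  assumes "binary_form m f"
  shows "binary_form (k + m) (\<lambda>u v. (g0*u + g1*v)^k * f u v)"
proof (induction k)
  case 0
  then show ?case using assms by simp
next
  case (Suc k)
  then show ?case
    using binary_form_linear_mult[OF Suc, of g0 g1] by (simp add: mult.assoc)
qed

lemma binary_form_homogeneous:
  assumes "binary_form m f"
  shows "f (l*u) (l*v) = l^m * f u v"
proof -
  obtain c where c: "\<And>u v. f u v = (\<Sum>r = 0..m. c r * u^(m-r) * v^r)"
    using assms unfolding binary_form_def by metis
  have "c r * (l*u)^(m-r) * (l*v)^r = l^m * (c r * u^(m-r) * v^r)" if "r \<le> m" for r
  proof -
    have "l^m = l^(m-r) * l^r"
      using that by (simp flip: power_add)
    then show ?thesis
      by (simp add: power_mult_distrib mult_ac)
  qed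
  then show ?thesis
    by (simp add: c sum_distrib_left)
qed

lemma binary_form_truncated_coeffs:
  assumes "binary_form m f"
  obtains c where "\<And>r. m < r \<Longrightarrow> c r = 0" and "\<And>u v. f u v = (\<Sum>r = 0..m. c r * u^(m-r) * v^r)"
proof -
  obtain c where c: "\<And>u v. f u v = (\<Sum>r = 0..m. c r * u^(m-r) * v^r)"
    using assms unfolding binary_form_def by metis
  show ?thesis
    by (rule that[of "\<lambda>r. if r \<le> m then c r else 0"]) (auto simp: c intro!: sum.cong)
qed

lemma Psi_binary_form: "binary_form (n div 2) (\<lambda>u v. Psi (a*u - \<alpha>*v) (b*u - \<beta>*v) n)"
proof (induction n rule: induct_nat_012)
  case 0
  then show ?case using binary_form_const[of 2] by simp
next
  case 1
  then show ?case using binary_form_const[of 1] by simp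
next
  case (ge2 n)
  have "binary_form (delta (Suc n) + Suc n div 2)
      (\<lambda>u v. ((2*a - b)*u + (\<beta> - 2*\<alpha>)*v) ^ delta (Suc n) * Psi (a*u - \<alpha>*v) (b*u - \<beta>*v) (Suc n))"
    by (rule binary_form_linear_power_mult[OF ge2(2)])
  moreover have "binary_form (Suc (n div 2)) (\<lambda>u v. (a*u + (-\<alpha>)*v) * Psi (a*u - \<alpha>*v) (b*u - \<beta>*v) n)"
    by (rule binary_form_linear_mult[OF ge2(1)])
  moreover have "delta (Suc n) + Suc n div 2 = Suc (Suc n) div 2" "Suc (n div 2) = Suc (Suc n) div 2"
    by (simp_all add: delta_def)
  moreover have "2*(a*u - \<alpha>*v) - (b*u - \<beta>*v) = (2*a - b)*u + (\<beta> - 2*\<alpha>)*v" for u v :: complex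
    by (simp add: algebra_simps)
  moreover have "a*u + (-\<alpha>)*v = a*u - \<alpha>*v" for u v :: complex
    by simp
  ultimately show ?case
    by (simp only: Psi.simps binary_form_diff)
qed

lemma Phi_binary_form: "binary_form ((n - 1) div 2) (\<lambda>u v. Phi (a*u - \<alpha>*v) (b*u - \<beta>*v) n)"
proof (induction n rule: induct_nat_012)
  case 0
  then show ?case using binary_form_const[of 0] by simp
next
  case 1
  then show ?case using binary_form_const[of 1] by simp
next
  case (ge2 n)
  show ?case
  proof (cases "n = 0")
    case True
    then show ?thesis using binary_form_const[of 1] by (simp add: delta_def)
  next
    case False
    have "binary_form (delta (Suc (Suc n)) + (Suc n - 1) div 2)
        (\<lambda>u v. ((2*a - b)*u + (\<beta> - 2*\<alpha>)*v) ^ delta (Suc (Suc n)) * Phi (a*u - \<alpha>*v) (b*u - \<beta>*v) (Suc n))"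
      by (rule binary_form_linear_power_mult[OF ge2(2)])
    moreover have "binary_form (Suc ((n - 1) div 2)) (\<lambda>u v. (a*u + (-\<alpha>)*v) * Phi (a*u - \<alpha>*v) (b*u - \<beta>*v) n)"
      by (rule binary_form_linear_mult[OF ge2(1)])
    moreover have "delta (Suc (Suc n)) + (Suc n - 1) div 2 = (Suc (Suc n) - 1) div 2"
        "Suc ((n - 1) div 2) = (Suc (Suc n) - 1) div 2"
      using False by (simp_all add: delta_def)
    moreover have "2*(a*u - \<alpha>*v) - (b*u - \<beta>*v) = (2*a - b)*u + (\<beta> - 2*\<alpha>)*v" for u v :: complex
      by (simp add: algebra_simps)
    moreover have "a*u + (-\<alpha>)*v = a*u - \<alpha>*v" for u v :: complex
      by simp
    ultimately show ?thesis
      by (simp only: Phi.simps binary_form_diff)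
  qed
qed

lemma Psi_scale: "Psi (l*a) (l*b) n = l^(n div 2) * Psi a b n"
  using binary_form_homogeneous[OF Psi_binary_form[of n a 0 b 0], of l 1 0]
  by (simp add: mult.commute)

lemma Phi_scale: "Phi (l*a) (l*b) n = l^((n - 1) div 2) * Phi a b n"
  using binary_form_homogeneous[OF Phi_binary_form[of n a 0 b 0], of l 1 0]
  by (simp add: mult.commute)

lemma Psi_power_sum: "Psi (x*y) (-(x^2+y^2)) n * (x+y)^delta n = x^n + y^n"
proof (induction n rule: induct_nat_012)
  case (ge2 n)
  have "Psi (x*y) (-(x^2+y^2)) (Suc (Suc n)) * (x+y)^delta (Suc (Suc n))
      = (x+y) * (Psi (x*y) (-(x^2+y^2)) (Suc n) * (x+y)^delta (Suc n))
        - x*y * (Psi (x*y) (-(x^2+y^2)) n * (x+y)^delta n)"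
    by (cases "even n") (simp_all add: delta_def power2_eq_square algebra_simps)
  also have "\<dots> = (x+y) * (x^Suc n + y^Suc n) - x*y * (x^n + y^n)"
    by (simp only: ge2)
  also have "\<dots> = x^Suc (Suc n) + y^Suc (Suc n)"
    by (simp add: algebra_simps)
  finally show ?case .
qed (simp_all add: delta_def)

lemma Phi_power_difference: "Phi (x*y) (-(x^2+y^2)) n * ((x-y) * (x+y)^delta (n - 1)) = x^n - y^n"
proof (induction n rule: induct_nat_012)
  case (ge2 n)
  have "Phi (x*y) (-(x^2+y^2)) (Suc (Suc n)) * ((x-y) * (x+y)^delta (Suc (Suc n) - 1))
      = (x+y) * (Phi (x*y) (-(x^2+y^2)) (Suc n) * ((x-y) * (x+y)^delta (Suc n - 1)))
        - x*y * (Phi (x*y) (-(x^2+y^2)) n * ((x-y) * (x+y)^delta (n - 1)))"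
    by (cases "even n"; cases n) (simp_all add: delta_def power2_eq_square algebra_simps)
  also have "\<dots> = (x+y) * (x^Suc n - y^Suc n) - x*y * (x^n - y^n)"
    by (simp only: ge2)
  also have "\<dots> = x^Suc (Suc n) - y^Suc (Suc n)"
    by (simp add: algebra_simps)
  finally show ?case .
qed (simp_all add: delta_def)

lemma finite_zeros_affine:
  fixes c0 c1 :: "'a::field"
  assumes "c0 \<noteq> 0 \<or> c1 \<noteq> 0"
  shows "finite {t. c0 + c1*t = 0}"
proof (cases "c1 = 0")
  case True
  then show ?thesis using assms by simp
next
  case False
  then have "{t. c0 + c1*t = 0} \<subseteq> {-c0/c1}"
    by (auto simp: field_simps add_eq_0_iff2)
  then show ?thesis
    by (rule finite_subset) simp
qed

lemma obtain_sum_of_squares_and_product: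
  fixes q w :: complex
  assumes "w + 2*q \<noteq> 0" "w - 2*q \<noteq> 0"
  obtains x y where "x + y \<noteq> 0" "x - y \<noteq> 0" "x*y = q" "x^2 + y^2 = w"
proof
  define s d where "s = csqrt (w + 2*q)" and "d = csqrt (w - 2*q)"
  have s2: "s^2 = w + 2*q" and d2: "d^2 = w - 2*q"
    by (simp_all add: s_def d_def)
  show "(s + d)/2 + (s - d)/2 \<noteq> 0" "(s + d)/2 - (s - d)/2 \<noteq> 0"
    using assms by (simp_all add: s_def d_def field_simps)
  have "(s + d)/2 * ((s - d)/2) = (s^2 - d^2)/4"
    by (simp add: power2_eq_square field_simps)
  then show "(s + d)/2 * ((s - d)/2) = q"
    by (simp add: s2 d2)
  have "((s + d)/2)^2 + ((s - d)/2)^2 = (s^2 + d^2)/2"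
    by (simp add: power2_eq_square field_simps)
  then show "((s + d)/2)^2 + ((s - d)/2)^2 = w"
    by (simp add: s2 d2)
qed

lemma obtain_quadratic_forms_values:
  fixes a b \<alpha> \<beta> t :: complex
  assumes "\<beta>*a - \<alpha>*b \<noteq> 0"
    and "(2*a - b) + (\<beta> - 2*\<alpha>)*t \<noteq> 0" "(-2*a - b) + (\<beta> + 2*\<alpha>)*t \<noteq> 0"
  obtains x y where "x + y \<noteq> 0" "x - y \<noteq> 0"
    "\<alpha>*x^2 + \<beta>*x*y + \<alpha>*y^2 = 1" "a*x^2 + b*x*y + a*y^2 = t"
proof -
  define D where "D = \<beta>*a - \<alpha>*b"
  \<comment> \<open>Both forms are linear in \<open>xy\<close> and \<open>x\<^sup>2 + y\<^sup>2\<close>; \<open>q\<close> and \<open>w\<close> solve the resulting linear system.\<close>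
  define q w where "q = (a - \<alpha>*t) / D" and "w = (\<beta>*t - b) / D"
  have D: "D \<noteq> 0"
    using assms(1) by (simp add: D_def)
  have "w + 2*q = ((2*a - b) + (\<beta> - 2*\<alpha>)*t) / D" "w - 2*q = ((-2*a - b) + (\<beta> + 2*\<alpha>)*t) / D"
    using D by (simp_all add: q_def w_def field_simps)
  then have "w + 2*q \<noteq> 0" "w - 2*q \<noteq> 0"
    using assms D by simp_all
  then obtain x y where xy: "x + y \<noteq> 0" "x - y \<noteq> 0" "x*y = q" "x^2 + y^2 = w"
    by (rule obtain_sum_of_squares_and_product)
  have "\<alpha>*(\<beta>*t - b) + \<beta>*(a - \<alpha>*t) = D" "a*(\<beta>*t - b) + b*(a - \<alpha>*t) = D*t"
    by (simp_all add: D_def algebra_simps)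
  then have "\<alpha>*w + \<beta>*q = 1" "a*w + b*q = t"
    using D by (simp_all add: q_def w_def flip: add_divide_distrib)
  moreover have "\<alpha>*x^2 + \<beta>*x*y + \<alpha>*y^2 = \<alpha>*w + \<beta>*q" "a*x^2 + b*x*y + a*y^2 = a*w + b*q"
    by (simp_all add: xy(3,4)[symmetric] algebra_simps)
  ultimately show ?thesis
    using that xy(1,2) by simp
qed

lemma quadratic_substitution_coeffs_eq_0:
  fixes a b \<alpha> \<beta> :: complex and e :: "nat \<Rightarrow> complex"
  assumes D: "\<beta>*a - \<alpha>*b \<noteq> 0"
    and vanish: "\<And>x y. x + y \<noteq> 0 \<Longrightarrow> x - y \<noteq> 0 \<Longrightarrow>
      (\<Sum>r = 0..m. e r * (\<alpha>*x^2 + \<beta>*x*y + \<alpha>*y^2)^(m - r) * (a*x^2 + b*x*y + a*y^2)^r) = 0"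
    and "r \<le> m"
  shows "e r = 0"
proof -
  define bad where "bad = {t. (2*a - b) + (\<beta> - 2*\<alpha>)*t = 0} \<union> {t. (-2*a - b) + (\<beta> + 2*\<alpha>)*t = 0}"
  have "finite bad"
    unfolding bad_def
  proof (intro finite_UnI finite_zeros_affine; rule ccontr)
    assume "\<not> (2*a - b \<noteq> 0 \<or> \<beta> - 2*\<alpha> \<noteq> 0)"
    moreover have "\<beta>*a - \<alpha>*b = (\<beta> - 2*\<alpha>)*a + \<alpha>*(2*a - b)"
      by (simp add: algebra_simps)
    ultimately show False
      using D by simp
  next
    assume "\<not> (-2*a - b \<noteq> 0 \<or> \<beta> + 2*\<alpha> \<noteq> 0)"
    moreover have "\<beta>*a - \<alpha>*b = (\<beta> + 2*\<alpha>)*a + \<alpha>*(-2*a - b)"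
      by (simp add: algebra_simps)
    ultimately show False
      using D by simp
  qed
  have "UNIV - bad \<subseteq> {t. (\<Sum>i\<le>m. e i * t^i) = 0}"
  proof
    fix t assume "t \<in> UNIV - bad"
    then obtain x y where "x + y \<noteq> 0" "x - y \<noteq> 0"
      and "\<alpha>*x^2 + \<beta>*x*y + \<alpha>*y^2 = 1" "a*x^2 + b*x*y + a*y^2 = t"
      using obtain_quadratic_forms_values[OF D] unfolding bad_def by blast
    then show "t \<in> {t. (\<Sum>i\<le>m. e i * t^i) = 0}"
      using vanish[of x y] by (simp add: atLeast0AtMost)
  qed
  moreover have "infinite (UNIV - bad :: complex set)"
    using \<open>finite bad\<close> by (simp add: infinite_UNIV_char_0)
  ultimately have "infinite {t. (\<Sum>i\<le>m. e i * t^i) = 0}"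
    using finite_subset by blast
  then show ?thesis
    using polyfun_finite_roots \<open>r \<le> m\<close> by blast
qed

lemma quadratic_substitution_coeffs_sum:
  fixes a b \<alpha> \<beta> \<theta> :: complex and P Q R :: "complex \<Rightarrow> complex \<Rightarrow> complex"
  assumes D: "\<beta>*a - \<alpha>*b \<noteq> 0"
    and form: "binary_form m (\<lambda>u v. P (a*u - \<alpha>*v) (b*u - \<beta>*v))"
    and scale: "\<And>l a b. P (l*a) (l*b) = l^m * P a b"
    and factor: "\<And>x y. P (x*y) (-(x^2 + y^2)) * Q x y = R x y"
    and Q_nonzero: "\<And>x y. x + y \<noteq> 0 \<Longrightarrow> x - y \<noteq> 0 \<Longrightarrow> Q x y \<noteq> 0"
  shows "(\<Sum>r = 0..m. (THE c. (\<forall>r. m < r \<longrightarrow> c r = 0) \<and>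
            (\<forall>x y. Q x y \<noteq> 0 \<longrightarrow> (\<beta>*a - \<alpha>*b)^m * R x y / Q x y =
              (\<Sum>r = 0..m. c r * (\<alpha>*x^2 + \<beta>*x*y + \<alpha>*y^2)^(m - r) * (a*x^2 + b*x*y + a*y^2)^r))) r
          * \<theta>^r)
       = P (a - \<alpha>*\<theta>) (b - \<beta>*\<theta>)"
    (is "(\<Sum>r = 0..m. The ?coeffs r * \<theta>^r) = _")
proof -
  obtain c where c_zero: "\<And>r. m < r \<Longrightarrow> c r = 0"
    and c: "\<And>u v. P (a*u - \<alpha>*v) (b*u - \<beta>*v) = (\<Sum>r = 0..m. c r * u^(m-r) * v^r)"
    using binary_form_truncated_coeffs[OF form] by metis
  have expansion: "(\<Sum>r = 0..m. c r * (\<alpha>*x^2 + \<beta>*x*y + \<alpha>*y^2)^(m - r) * (a*x^2 + b*x*y + a*y^2)^r)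
      = (\<beta>*a - \<alpha>*b)^m * P (x*y) (-(x^2 + y^2))" for x y
  proof -
    have "a*(\<alpha>*x^2 + \<beta>*x*y + \<alpha>*y^2) - \<alpha>*(a*x^2 + b*x*y + a*y^2) = (\<beta>*a - \<alpha>*b) * (x*y)"
      "b*(\<alpha>*x^2 + \<beta>*x*y + \<alpha>*y^2) - \<beta>*(a*x^2 + b*x*y + a*y^2) = (\<beta>*a - \<alpha>*b) * (-(x^2 + y^2))"
      by (simp_all add: algebra_simps power2_eq_square)
    then show ?thesis
      by (simp add: c[symmetric] scale)
  qed
  have the_c: "The ?coeffs = c"
  proof (rule the_equality)
    show "?coeffs c"
      by (simp add: c_zero expansion factor[symmetric])
  next
    fix d
    assume d: "?coeffs d"
    have coeff_diff: "d r - c r = 0" if "r \<le> m" for r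
    proof (rule quadratic_substitution_coeffs_eq_0[OF D _ that])
      fix x y :: complex
      assume "x + y \<noteq> 0" "x - y \<noteq> 0"
      then have "Q x y \<noteq> 0"
        by (rule Q_nonzero)
      then show "(\<Sum>r = 0..m. (d r - c r) * (\<alpha>*x^2 + \<beta>*x*y + \<alpha>*y^2)^(m - r) * (a*x^2 + b*x*y + a*y^2)^r) = 0"
        using d by (simp add: expansion factor[symmetric] left_diff_distrib sum_subtractf)
    qed
    show "d = c"
    proof
      fix r
      show "d r = c r"
        using coeff_diff[of r] d c_zero[of r] by (cases "r \<le> m") auto
    qed
  qed
  show ?thesis
    using c[of 1 \<theta>] by (simp add: the_c)
qed

lemma Psi_coef_sum:
  assumes "\<beta>*a - \<alpha>*b \<noteq> 0"
  shows "(\<Sum>r = 0..n div 2. Psi_coef a b \<alpha> \<beta> n r * \<theta>^r) = Psi (a - \<alpha>*\<theta>) (b - \<beta>*\<theta>) n"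
  unfolding Psi_coef_def
  by (rule quadratic_substitution_coeffs_sum[where P = "\<lambda>a b. Psi a b n"
        and Q = "\<lambda>x y. (x + y)^delta n" and R = "\<lambda>x y. x^n + y^n",
        OF assms Psi_binary_form Psi_scale Psi_power_sum]) simp

lemma Phi_coef_sum:
  assumes "\<beta>*a - \<alpha>*b \<noteq> 0"
  shows "(\<Sum>r = 0..(n - 1) div 2. Phi_coef a b \<alpha> \<beta> n r * \<theta>^r) = Phi (a - \<alpha>*\<theta>) (b - \<beta>*\<theta>) n"
  unfolding Phi_coef_def
  by (rule quadratic_substitution_coeffs_sum[where P = "\<lambda>a b. Phi a b n"
        and Q = "\<lambda>x y. (x - y) * (x + y)^delta (n - 1)" and R = "\<lambda>x y. x^n - y^n",
        OF assms Phi_binary_form Phi_scale Phi_power_difference]) simp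

theorem theorem10p1:
  fixes a b \<alpha> \<beta> \<theta> :: complex and n :: nat
  assumes "\<beta>*a - \<alpha>*b \<noteq> 0" and "n \<ge> 1"
  shows "(\<Sum>r = 0..n div 2. Psi_coef a b \<alpha> \<beta> n r * \<theta>^r) = Psi (a - \<alpha>*\<theta>) (b - \<beta>*\<theta>) n
       \<and> (\<Sum>r = 0..(n - 1) div 2. Phi_coef a b \<alpha> \<beta> n r * \<theta>^r) = Phi (a - \<alpha>*\<theta>) (b - \<beta>*\<theta>) n"
  using Psi_coef_sum[OF assms(1)] Phi_coef_sum[OF assms(1)] by blast

end
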